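(* Let $n\ge1$, $0\le c_0<c_1<\dots<c_n$, $v_0\ge v_1\ge\dots\ge v_n>0$, $0\le\rho_k<\frac{v_k}{2}$ ($k=0,\dots,n$), and let $B=(b_{jk})_{j,k=0}^n$ with $b_{jk}=v_k-c_k$ if $j>k$, $b_{kk}=\frac{v_k}{2}-c_k-\rho_k$, $b_{jk}=-c_j$ if $j<k$. Let $\mathbf{p}$ be the ESS for $B$. If $j<n$ and $c_j\ge c_n+\rho_n-\frac12v_n$, then $p_j=0$.
   Context: Strategies are indexed $0,\dots,n$, $\overline\Delta=\{\mathbf{q}\in[0,1]^{n+1}:\sum q_j=1\}$. $\mathbf{p}\in\overline\Delta$ is an ESS for $B$ if (i) $\mathbf{p}^TB\mathbf{p}\ge\mathbf{q}^TB\mathbf{p}$ for all $\mathbf{q}\in\overline\Delta$ and (ii) whenever $\mathbf{q}\ne\mathbf{p}$ and $\mathbf{p}^TB\mathbf{p}=\mathbf{q}^TB\mathbf{p}$, then $\mathbf{p}^TB\mathbf{q}>\mathbf{q}^TB\mathbf{q}$. For such $B$ an ESS exists and is unique. *)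

theory Defs
  imports Main "HOL-Analysis.Analysis"
begin

definition strat_simplex :: "nat \<Rightarrow> (nat \<Rightarrow> real) set" where
  "strat_simplex n = {q. (\<forall>i\<le>n. 0 \<le> q i \<and> q i \<le> 1) \<and> (\<forall>i>n. q i = 0)
                   \<and> (\<Sum>i\<le>n. q i) = 1}"

definition bform :: "nat \<Rightarrow> (nat \<Rightarrow> nat \<Rightarrow> real) \<Rightarrow> (nat \<Rightarrow> real) \<Rightarrow> (nat \<Rightarrow> real) \<Rightarrow> real" where
  "bform n B x y = (\<Sum>j\<le>n. \<Sum>k\<le>n. x j * B j k * y k)"

definition is_ESS :: "nat \<Rightarrow> (nat \<Rightarrow> nat \<Rightarrow> real) \<Rightarrow> (nat \<Rightarrow> real) \<Rightarrow> bool" where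
  "is_ESS n B p \<longleftrightarrow> p \<in> strat_simplex n
     \<and> (\<forall>q\<in>strat_simplex n. bform n B p p \<ge> bform n B q p)
     \<and> (\<forall>q\<in>strat_simplex n. q \<noteq> p \<and> bform n B p p = bform n B q p
           \<longrightarrow> bform n B p q > bform n B q q)"

definition payoff_matrix :: "(nat \<Rightarrow> real) \<Rightarrow> (nat \<Rightarrow> real) \<Rightarrow> (nat \<Rightarrow> real) \<Rightarrow> nat \<Rightarrow> nat \<Rightarrow> real" where
  "payoff_matrix c v \<rho> j k =
     (if j > k then v k - c k
      else if j = k then v k / 2 - c k - \<rho> k
      else - c j)"

end

theory Submission
  imports Defs
begin

text \<open>Since \<open>p\<close> is in particular a symmetric Nash equilibrium, every pure strategy in its
  support earns the maximal payoff against \<open>p\<close>. Let \<open>m\<close> be the last index in \<open>[j, n)\<close> with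
  \<open>p\<^sub>m > 0\<close>. Against \<open>p\<close>, the rows \<open>n\<close> and \<open>m\<close> of \<open>B\<close> agree below column \<open>m\<close>, row \<open>n\<close> gains
  \<open>v\<^sub>m/2 + \<rho>\<^sub>m > 0\<close> in column \<open>m\<close> and \<open>c\<^sub>m - c\<^sub>n - \<rho>\<^sub>n + v\<^sub>n/2 \<ge> 0\<close> in column \<open>n\<close>, and the
  columns strictly between carry no weight. So the pure strategy \<open>n\<close> strictly beats \<open>m\<close>,
  contradicting \<open>p\<^sub>m > 0\<close>.\<close>

lemma Suc_mono_below_le:
  fixes f :: "nat \<Rightarrow> 'a::preorder"
  assumes "\<forall>k<n. f k \<le> f (Suc k)" "i \<le> j" "j \<le> n"
  shows "f i \<le> f j"
proof -
  have "f (min k n) \<le> f (min (Suc k) n)" for k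
    using assms(1) by (cases "k < n") (simp_all add: min_def)
  then have "f (min i n) \<le> f (min j n)" using assms(2) by (rule lift_Suc_mono_le)
  then show ?thesis using assms(2,3) by (simp add: min_absorb1)
qed

lemma obtain_last_below:
  fixes j n :: nat
  assumes "P j" "j < n"
  obtains m where "j \<le> m" "m < n" "P m" "\<And>k. m < k \<Longrightarrow> k < n \<Longrightarrow> \<not> P k"
proof -
  let ?S = "{i. j \<le> i \<and> i < n \<and> P i}"
  define m where "m = Max ?S"
  have fin: "finite ?S" by (rule finite_subset[of _ "{..<n}"]) auto
  moreover have "j \<in> ?S" using assms by simp
  ultimately have m_in: "m \<in> ?S" unfolding m_def by (metis Max_in empty_iff)
  have "\<not> P k" if "m < k" "k < n" for k
  proof
    assume "P k"
    with that m_in have "k \<le> m" unfolding m_def using Max_ge[OF fin, of k] by auto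
    with \<open>m < k\<close> show False by simp
  qed
  with m_in that[of m] show thesis by blast
qed

lemma strat_simplex_nonneg: "q \<in> strat_simplex n \<Longrightarrow> i \<le> n \<Longrightarrow> 0 \<le> q i"
  and strat_simplex_sum: "q \<in> strat_simplex n \<Longrightarrow> (\<Sum>i\<le>n. q i) = 1"
  unfolding strat_simplex_def by auto

lemma pure_strat_in_simplex: "i \<le> n \<Longrightarrow> (\<lambda>k. if k = i then 1 else 0) \<in> strat_simplex n"
  unfolding strat_simplex_def by auto

definition pure_payoff :: "nat \<Rightarrow> (nat \<Rightarrow> nat \<Rightarrow> real) \<Rightarrow> nat \<Rightarrow> (nat \<Rightarrow> real) \<Rightarrow> real" where
  "pure_payoff n B i p = (\<Sum>k\<le>n. B i k * p k)"

lemma bform_eq_sum_pure_payoff: "bform n B q p = (\<Sum>i\<le>n. q i * pure_payoff n B i p)"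
  unfolding bform_def pure_payoff_def by (simp add: sum_distrib_left mult.assoc)

definition is_symmetric_Nash :: "nat \<Rightarrow> (nat \<Rightarrow> nat \<Rightarrow> real) \<Rightarrow> (nat \<Rightarrow> real) \<Rightarrow> bool" where
  "is_symmetric_Nash n B p \<longleftrightarrow> p \<in> strat_simplex n
     \<and> (\<forall>q\<in>strat_simplex n. bform n B q p \<le> bform n B p p)"

lemma is_ESS_imp_symmetric_Nash: "is_ESS n B p \<Longrightarrow> is_symmetric_Nash n B p"
  unfolding is_ESS_def is_symmetric_Nash_def by auto

lemma symmetric_Nash_pure_payoff_le:
  assumes "is_symmetric_Nash n B p" "i \<le> n"
  shows "pure_payoff n B i p \<le> bform n B p p"
proof -
  let ?e = "\<lambda>k. if k = i then 1 else 0 :: real"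
  have "bform n B ?e p = pure_payoff n B i p"
    using assms(2) by (simp add: bform_eq_sum_pure_payoff if_distrib[of "\<lambda>x. x * _"] cong: if_cong)
  moreover have "bform n B ?e p \<le> bform n B p p"
    using assms pure_strat_in_simplex unfolding is_symmetric_Nash_def by blast
  ultimately show ?thesis by simp
qed

text \<open>\<open>bform n B p p\<close> is the \<open>p\<close>-average of the pure payoffs, each of which is at most it.\<close>

lemma symmetric_Nash_pure_payoff_eq:
  assumes nash: "is_symmetric_Nash n B p" and "i \<le> n" "p i > 0"
  shows "pure_payoff n B i p = bform n B p p"
proof (rule ccontr)
  let ?P = "bform n B p p"
  have p: "p \<in> strat_simplex n" using nash unfolding is_symmetric_Nash_def by blast
  assume "pure_payoff n B i p \<noteq> ?P"
  then have "pure_payoff n B i p < ?P"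
    using symmetric_Nash_pure_payoff_le[OF nash \<open>i \<le> n\<close>] by simp
  then have "(\<Sum>k\<le>n. p k * pure_payoff n B k p) < (\<Sum>k\<le>n. p k * ?P)"
    using assms(2,3) symmetric_Nash_pure_payoff_le[OF nash] strat_simplex_nonneg[OF p]
    by (intro sum_strict_mono_ex1 bexI[of _ i]) (auto intro: mult_left_mono)
  also have "\<dots> = ?P" using strat_simplex_sum[OF p] by (simp add: sum_distrib_right[symmetric])
  finally show False by (simp add: bform_eq_sum_pure_payoff)
qed

lemma symmetric_Nash_support_payoff_ge:
  assumes "is_symmetric_Nash n B p" "m \<le> n" "p m > 0" "i \<le> n"
  shows "pure_payoff n B i p \<le> pure_payoff n B m p"
  using symmetric_Nash_pure_payoff_le symmetric_Nash_pure_payoff_eq assms by simp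

lemma payoff_matrix_last_row_gain:
  assumes "m < n" "\<And>k. m < k \<Longrightarrow> k < n \<Longrightarrow> p k = 0"
  shows "pure_payoff n (payoff_matrix c v \<rho>) n p - pure_payoff n (payoff_matrix c v \<rho>) m p
           = (v m / 2 + \<rho> m) * p m + (v n / 2 - c n - \<rho> n + c m) * p n"
proof -
  let ?B = "payoff_matrix c v \<rho>"
  let ?g = "\<lambda>k. (if k = m then (v m / 2 + \<rho> m) * p m else 0)
                + (if k = n then (v n / 2 - c n - \<rho> n + c m) * p n else 0)"
  have "(?B n k - ?B m k) * p k = ?g k" if "k \<le> n" for k
    using that assms unfolding payoff_matrix_def by (cases "k < m") (auto simp: algebra_simps)
  then have "(\<Sum>k\<le>n. (?B n k - ?B m k) * p k) = (\<Sum>k\<le>n. ?g k)" by simp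
  also have "\<dots> = (v m / 2 + \<rho> m) * p m + (v n / 2 - c n - \<rho> n + c m) * p n"
    using assms(1) by (simp add: sum.distrib)
  finally show ?thesis
    unfolding pure_payoff_def by (simp add: sum_subtractf left_diff_distrib)
qed

theorem lemma5p2:
  fixes n j :: nat and c v \<rho> p :: "nat \<Rightarrow> real"
  assumes "n \<ge> 1"
    and "0 \<le> c 0"
    and "\<forall>k<n. c k < c (Suc k)"
    and "\<forall>k<n. v k \<ge> v (Suc k)"
    and "v n > 0"
    and "\<forall>k\<le>n. 0 \<le> \<rho> k \<and> \<rho> k < v k / 2"
    and "is_ESS n (payoff_matrix c v \<rho>) p"
    and "j < n"
    and "c j \<ge> c n + \<rho> n - v n / 2"
  shows "p j = 0"
proof (rule ccontr)
  let ?B = "payoff_matrix c v \<rho>"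
  have nash: "is_symmetric_Nash n ?B p" using assms(7) by (rule is_ESS_imp_symmetric_Nash)
  have p_nonneg: "\<And>i. i \<le> n \<Longrightarrow> 0 \<le> p i"
    using nash strat_simplex_nonneg unfolding is_symmetric_Nash_def by blast
  assume "p j \<noteq> 0"
  then have "p j > 0" using p_nonneg[of j] assms(8) by simp
  then obtain m where "j \<le> m" "m < n" "p m > 0"
    and last_pos: "\<And>k. m < k \<Longrightarrow> k < n \<Longrightarrow> \<not> p k > 0"
    using obtain_last_below[where P = "\<lambda>i. p i > 0"] assms(8) by blast
  have gap: "p k = 0" if "m < k" "k < n" for k
    using last_pos[OF that] p_nonneg[of k] that by simp
  have "\<forall>k<n. c k \<le> c (Suc k)" using assms(3) by (simp add: less_imp_le)
  then have "c j \<le> c m" using \<open>j \<le> m\<close> \<open>m < n\<close> by (simp add: Suc_mono_below_le)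
  then have gain_n: "0 \<le> v n / 2 - c n - \<rho> n + c m" using assms(9) by linarith
  have gain_m: "0 < v m / 2 + \<rho> m" using assms(6)[rule_format, of m] \<open>m < n\<close> by linarith
  have "0 < (v m / 2 + \<rho> m) * p m + (v n / 2 - c n - \<rho> n + c m) * p n"
    using gain_m gain_n \<open>p m > 0\<close> p_nonneg[of n] by (simp add: add_pos_nonneg)
  moreover have "pure_payoff n ?B n p \<le> pure_payoff n ?B m p"
    using nash \<open>m < n\<close> \<open>p m > 0\<close> by (intro symmetric_Nash_support_payoff_ge) auto
  moreover have "pure_payoff n ?B n p - pure_payoff n ?B m p
      = (v m / 2 + \<rho> m) * p m + (v n / 2 - c n - \<rho> n + c m) * p n"
    using \<open>m < n\<close> gap by (rule payoff_matrix_last_row_gain)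
  ultimately show False by linarith
qed

end
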